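(* Let $\rho,\sigma\in\mathrm{Rect}^\ast(n)$ and let $\lambda\mapsto\lambda^\ast$ denote conjugation of partitions. Then: (1) $A(\rho^\ast)=A(\rho)^\ast$ and $s(\rho^\ast)=s(\rho)^\ast$; (2) $d_{\mathrm{sup}}(\rho,\sigma)=d_{\mathrm{sup}}(\rho^\ast,\sigma^\ast)$; (3) conjugation maps the support geodesics from $\rho$ to $\sigma$ bijectively onto the support geodesics from $\rho^\ast$ to $\sigma^\ast$, and hence $\mathrm{Corr}_{\mathrm{all}}(\rho^\ast,\sigma^\ast)=\mathrm{Corr}_{\mathrm{all}}(\rho,\sigma)^\ast$.
   Context: The partition graph $G_n$ has as vertices the integer partitions of $n$; two partitions are adjacent if one is obtained from the other by a single elementary unit transfer followed by reordering: decrease one part by $1$ and either increase a different part by $1$ or create a new part equal to $1$, then delete a part that became $0$ and sort in nonincreasing order (the result being different from the original). Conjugation transposes the Ferrers diagram; it is applied elementwise to sets, edges and paths. $\mathrm{Rect}^\ast(n)=\{(a^b):ab=n,\ a,b\ge2\}$, where $(a^b)$ has $b$ parts equal to $a$. For $\rho=(a^b)\in\mathrm{Rect}^\ast(n)$ let $\alpha(\rho)=(a+1,a^{\,b-2},a-1)$ (equal to $(a+1,a-1)$ if $b=2$) and $\beta(\rho)=(a^{\,b-1},a-1,1)$; the attachment pair is $A(\rho)=\{\alpha(\rho),\beta(\rho)\}$ and the support edge is $s(\rho)=\alpha(\rho)\beta(\rho)$. The support distance $d_{\mathrm{sup}}(\rho,\sigma)\in\mathbb N_0\cup\{\infty\}$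 is the minimum of the graph distances in $G_n\setminus\mathrm{Rect}^\ast(n)$ between a vertex of $A(\rho)$ and a vertex of $A(\sigma)$, and $\infty$ if no path in $G_n\setminus\mathrm{Rect}^\ast(n)$ joins them. When $d_{\mathrm{sup}}(\rho,\sigma)<\infty$, a support geodesic from $\rho$ to $\sigma$ is a shortest path in $G_n\setminus\mathrm{Rect}^\ast(n)$ joining some vertex of $A(\rho)$ to some vertex of $A(\sigma)$, i.e. of length $d_{\mathrm{sup}}(\rho,\sigma)$; $\mathrm{Corr}_{\mathrm{all}}(\rho,\sigma)$ is the union of all support geodesics from $\rho$ to $\sigma$, and $\mathrm{Corr}_{\mathrm{all}}(\rho,\sigma)=\varnothing$ if $d_{\mathrm{sup}}(\rho,\sigma)=\infty$. *)

theory Defs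
  imports Main "HOL-Library.Extended_Nat" "HOL-Library.Uprod"
begin

definition is_partition :: "nat \<Rightarrow> nat list \<Rightarrow> bool" where
  "is_partition n lam \<longleftrightarrow> sorted_wrt (\<ge>) lam \<and> 0 \<notin> set lam \<and> sum_list lam = n"

definition Partitions :: "nat \<Rightarrow> nat list set" where
  "Partitions n = {lam. is_partition n lam}"

definition normalize :: "nat list \<Rightarrow> nat list" where
  "normalize xs = rev (sort (filter (\<lambda>x. x \<noteq> 0) xs))"

definition unit_move :: "nat list \<Rightarrow> nat list \<Rightarrow> bool" where
  "unit_move mu nu \<longleftrightarrow> nu \<noteq> mu \<and>
     ((\<exists>i j. i < length mu \<and> j < length mu \<and> i \<noteq> j \<and> 1 \<le> mu ! i \<and>
              nu = normalize ((mu[i := mu ! i - 1])[j := mu ! j + 1])) \<or>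
      (\<exists>i. i < length mu \<and> 1 \<le> mu ! i \<and> nu = normalize (mu[i := mu ! i - 1] @ [1])))"

definition adj :: "nat \<Rightarrow> nat list \<Rightarrow> nat list \<Rightarrow> bool" where
  "adj n mu nu \<longleftrightarrow> mu \<in> Partitions n \<and> nu \<in> Partitions n \<and> (unit_move mu nu \<or> unit_move nu mu)"

definition Rect :: "nat \<Rightarrow> nat list set" where
  "Rect n = {replicate b a | a b. a * b = n \<and> 2 \<le> a \<and> 2 \<le> b}"

definition conjugate :: "nat list \<Rightarrow> nat list" where
  "conjugate lam = map (\<lambda>j. length (filter (\<lambda>x. Suc j \<le> x) lam)) [0..<foldr max lam 0]"

definition alpha :: "nat list \<Rightarrow> nat list" where
  "alpha rho = (let a = hd rho; b = length rho in [a + 1] @ replicate (b - 2) a @ [a - 1])"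

definition beta :: "nat list \<Rightarrow> nat list" where
  "beta rho = (let a = hd rho; b = length rho in replicate (b - 1) a @ [a - 1, 1])"

definition attach :: "nat list \<Rightarrow> nat list set" where
  "attach rho = {alpha rho, beta rho}"

definition support_edge :: "nat list \<Rightarrow> nat list uprod" where
  "support_edge rho = Upair (alpha rho) (beta rho)"

definition walk :: "nat \<Rightarrow> nat list list \<Rightarrow> bool" where
  "walk n p \<longleftrightarrow> p \<noteq> [] \<and> set p \<subseteq> Partitions n - Rect n \<and>
     (\<forall>i. Suc i < length p \<longrightarrow> adj n (p ! i) (p ! Suc i))"

definition support_walks :: "nat \<Rightarrow> nat list \<Rightarrow> nat list \<Rightarrow> nat list list set" where
  "support_walks n rho sigma = {p. walk n p \<and> hd p \<in> attach rho \<and> last p \<in> attach sigma}"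

definition d_sup :: "nat \<Rightarrow> nat list \<Rightarrow> nat list \<Rightarrow> enat" where
  "d_sup n rho sigma = (INF p \<in> support_walks n rho sigma. enat (length p - 1))"

definition support_geodesics :: "nat \<Rightarrow> nat list \<Rightarrow> nat list \<Rightarrow> nat list list set" where
  "support_geodesics n rho sigma =
     {p \<in> support_walks n rho sigma. enat (length p - 1) = d_sup n rho sigma}"

definition path_edges :: "nat list list \<Rightarrow> nat list uprod set" where
  "path_edges p = {Upair (p ! i) (p ! Suc i) | i. Suc i < length p}"

definition Corr_all :: "nat \<Rightarrow> nat list \<Rightarrow> nat list \<Rightarrow> nat list set \<times> nat list uprod set" where
  "Corr_all n rho sigma =
     ((\<Union>p \<in> support_geodesics n rho sigma. set p),
      (\<Union>p \<in> support_geodesics n rho sigma. path_edges p))"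

definition conj_graph :: "nat list set \<times> nat list uprod set \<Rightarrow> nat list set \<times> nat list uprod set" where
  "conj_graph G = (conjugate ` fst G, map_uprod conjugate ` snd G)"

end

theory Submission
  imports Defs "HOL-Library.Multiset"
begin

text \<open>
  Write c_k(\<lambda>) for the number of parts of \<lambda> exceeding k, the length of column k of the
  Ferrers diagram; the conjugate is the list of these column lengths, and the diagram is
  {(i, k). i < c_k(\<lambda>)}. Transferring a unit from a part m to a part v (v = 0 for a new
  part) lowers c_(m-1) by one and raises c_v by one; conversely, if the column lengths of
  two partitions differ in this way, the monotonicity of the columns provides the two parts
  needed to realise the change by a unit transfer. In terms of diagrams, two partitions are
  adjacent iff one diagram arises from the other by moving a single cell. This property is
  invariant under transposition, so conjugation is an involutive automorphism of G_n. It
  maps Rect*(n) onto itself, (a^b) to (b^a), and exchanges \<alpha> and \<beta>. Hence it maps support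
  walks bijectively onto support walks, preserving their lengths, and all three claims
  follow.
\<close>

section \<open>Column lengths and conjugation\<close>

definition column_length :: "nat list \<Rightarrow> nat \<Rightarrow> nat" where
  "column_length lam k = length (filter (\<lambda>x. k < x) lam)"

lemma column_length_Nil [simp]: "column_length [] k = 0"
  by (simp add: column_length_def)

lemma column_length_Cons [simp]:
  "column_length (x # xs) k = (if k < x then 1 else 0) + column_length xs k"
  by (simp add: column_length_def)

lemma column_length_append [simp]:
  "column_length (xs @ ys) k = column_length xs k + column_length ys k"
  by (simp add: column_length_def)

lemma column_length_replicate [simp]:
  "column_length (replicate b a) k = (if k < a then b else 0)"
  by (simp add: column_length_def filter_replicate)

lemma column_length_antimono: "k \<le> l \<Longrightarrow> column_length xs l \<le> column_length xs k"
  by (induction xs) auto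

lemma column_length_update:
  "i < length xs \<Longrightarrow>
   column_length (xs[i := v]) k + (if k < xs ! i then 1 else 0) =
   column_length xs k + (if k < v then 1 else 0)"
proof (induction xs arbitrary: i)
  case (Cons x xs)
  then show ?case
    by (cases i) auto
qed simp

lemma sorted_normalize: "sorted_wrt (\<ge>) (normalize xs)"
  by (simp add: normalize_def sorted_wrt_rev)

lemma zero_notin_normalize: "0 \<notin> set (normalize xs)"
  by (simp add: normalize_def)

lemma column_length_normalize [simp]: "column_length (normalize xs) k = column_length xs k"
proof -
  have "mset (normalize xs) = mset (filter (\<lambda>x. x \<noteq> 0) xs)"
    by (simp add: normalize_def)
  then have "column_length (normalize xs) k = column_length (filter (\<lambda>x. x \<noteq> 0) xs) k"
    unfolding column_length_def by (metis mset_filter size_mset)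
  also have "\<dots> = column_length xs k"
    by (induction xs) auto
  finally show ?thesis .
qed

lemma column_length_diff_eq_count:
  "column_length xs k = column_length xs (Suc k) + count (mset xs) (Suc k)"
  by (induction xs) auto

lemma less_foldr_max_iff: "k < foldr max xs 0 \<longleftrightarrow> 0 < column_length xs k"
  by (induction xs) auto

lemma nat_eqI_less_iff: "(\<And>k. k < a \<longleftrightarrow> k < b) \<Longrightarrow> (a :: nat) = b"
  by (metis less_irrefl nat_neq_iff)

lemma foldr_max_eqI:
  "(\<And>k. 0 < column_length lam k \<longleftrightarrow> k < m) \<Longrightarrow> foldr max lam 0 = m"
  by (rule nat_eqI_less_iff) (simp add: less_foldr_max_iff)

lemma foldr_max_ge: "x \<in> set xs \<Longrightarrow> x \<le> foldr max xs (0 :: nat)"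
  by (induction xs) (auto simp: le_max_iff_disj)

lemma conjugate_eq_map_column_length:
  "conjugate lam = map (column_length lam) [0..<foldr max lam 0]"
  by (simp add: conjugate_def column_length_def Suc_le_eq)

lemma length_conjugate: "length (conjugate lam) = foldr max lam 0"
  by (simp add: conjugate_eq_map_column_length)

lemma nth_conjugate: "k < foldr max lam 0 \<Longrightarrow> conjugate lam ! k = column_length lam k"
  by (simp add: conjugate_eq_map_column_length)

lemma less_column_length_iff:
  "sorted_wrt (\<ge>) lam \<Longrightarrow>
   i < column_length lam k \<longleftrightarrow> i < length lam \<and> k < lam ! i"
proof (induction lam arbitrary: i)
  case (Cons x xs)
  then have "sorted_wrt (\<ge>) xs" and bound: "\<forall>y\<in>set xs. y \<le> x"
    by auto
  show ?case
  proof (cases "k < x")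
    case True
    then show ?thesis
      using Cons.IH[OF \<open>sorted_wrt (\<ge>) xs\<close>] by (cases i) auto
  next
    case False
    then have "column_length xs k = 0" and "\<forall>y\<in>set xs. \<not> k < y"
      using bound by (auto simp: column_length_def filter_empty_conv)
    then show ?thesis
      using False by (cases i) (auto dest: nth_mem)
  qed
qed simp

lemma length_filter_less_upt: "length (filter (\<lambda>k. k < c) [0..<m]) = min c m"
  by (induction m) auto

lemma column_length_conjugate:
  assumes "sorted_wrt (\<ge>) lam"
  shows "column_length (conjugate lam) i = (if i < length lam then lam ! i else 0)"
proof -
  have "column_length (conjugate lam) i =
        length (filter (\<lambda>k. i < length lam \<and> k < lam ! i) [0..<foldr max lam 0])"
    using less_column_length_iff[OF assms]
    by (simp add: conjugate_eq_map_column_length column_length_def filter_map comp_def)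
  moreover have "lam ! i \<le> foldr max lam 0" if "i < length lam"
    using that foldr_max_ge nth_mem by blast
  ultimately show ?thesis
    by (auto simp: length_filter_less_upt)
qed

definition diagram :: "nat list \<Rightarrow> (nat \<times> nat) set" where
  "diagram lam = {(i, k). i < column_length lam k}"

lemma diagram_conjugate:
  "sorted_wrt (\<ge>) lam \<Longrightarrow> diagram (conjugate lam) = prod.swap ` diagram lam"
  by (auto simp: diagram_def column_length_conjugate less_column_length_iff image_iff)

lemma card_diagram: "sorted_wrt (\<ge>) lam \<Longrightarrow> card (diagram lam) = sum_list lam"
proof -
  assume "sorted_wrt (\<ge>) lam"
  then have "diagram lam = Sigma {..<length lam} (\<lambda>i. {..<lam ! i})"
    by (auto simp: diagram_def less_column_length_iff)
  then show ?thesis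
    by (simp add: sum_list_sum_nth atLeast0LessThan)
qed

lemma sorted_conjugate: "sorted_wrt (\<ge>) (conjugate lam)"
  unfolding conjugate_eq_map_column_length sorted_wrt_map
  by (rule sorted_wrt_mono_rel[OF _ sorted_wrt_upt]) (simp add: column_length_antimono)

lemma zero_notin_conjugate: "0 \<notin> set (conjugate lam)"
  by (auto simp: conjugate_eq_map_column_length less_foldr_max_iff)

lemma sum_list_conjugate:
  assumes "sorted_wrt (\<ge>) lam"
  shows "sum_list (conjugate lam) = sum_list lam"
proof -
  have "sum_list (conjugate lam) = card (prod.swap ` diagram lam)"
    using card_diagram[OF sorted_conjugate[of lam]] diagram_conjugate[OF assms] by simp
  also have "\<dots> = sum_list lam"
    using card_diagram[OF assms] by (simp add: card_image)
  finally show ?thesis .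
qed

lemma conjugate_in_Partitions: "lam \<in> Partitions n \<Longrightarrow> conjugate lam \<in> Partitions n"
  by (simp add: Partitions_def is_partition_def sorted_conjugate zero_notin_conjugate
      sum_list_conjugate)

lemma conjugate_conjugate:
  assumes "sorted_wrt (\<ge>) lam" and "0 \<notin> set lam"
  shows "conjugate (conjugate lam) = lam"
proof -
  have "0 < lam ! k" if "k < length lam" for k
    using assms(2) that by (metis gr0I nth_mem)
  then have "foldr max (conjugate lam) 0 = length lam"
    by (intro foldr_max_eqI) (auto simp: column_length_conjugate[OF assms(1)])
  then show ?thesis
    by (auto intro!: nth_equalityI simp: length_conjugate nth_conjugate
        column_length_conjugate[OF assms(1)])
qed

lemma conjugate_cong: "column_length xs = column_length ys \<Longrightarrow> conjugate xs = conjugate ys"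
  by (metis conjugate_eq_map_column_length less_foldr_max_iff nat_eqI_less_iff)

lemma column_length_inject:
  assumes "sorted_wrt (\<ge>) xs" "0 \<notin> set xs" "sorted_wrt (\<ge>) ys" "0 \<notin> set ys"
    and "column_length xs = column_length ys"
  shows "xs = ys"
  by (metis assms conjugate_conjugate conjugate_cong)

section \<open>Unit transfers are cell moves\<close>

lemma column_length_decrement:
  assumes "i < length xs" "0 < xs ! i"
  shows "column_length (xs[i := xs ! i - 1]) k + (if k = xs ! i - 1 then 1 else 0) =
         column_length xs k"
  using column_length_update[where xs = xs and i = i and v = "xs ! i - 1" and k = k] assms
  by (cases "k < xs ! i"; cases "k < xs ! i - 1"; cases "k = xs ! i - 1") auto

lemma column_length_increment:
  assumes "i < length xs"
  shows "column_length (xs[i := xs ! i + 1]) k = column_length xs k + (if k = xs ! i then 1 else 0)"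
  using column_length_update[where xs = xs and i = i and v = "xs ! i + 1" and k = k] assms
  by (cases "k < xs ! i"; cases "k = xs ! i") auto

lemma column_length_transfer:
  assumes "i < length xs" "j < length xs" "i \<noteq> j" "0 < xs ! i"
  shows "column_length (xs[i := xs ! i - 1, j := xs ! j + 1]) k + (if k = xs ! i - 1 then 1 else 0) =
         column_length xs k + (if k = xs ! j then 1 else 0)"
  using column_length_increment[where xs = "xs[i := xs ! i - 1]" and i = j and k = k]
    column_length_decrement[OF assms(1,4), of k] assms(2,3)
  by simp

lemma column_length_transfer_new_part:
  assumes "i < length xs" "0 < xs ! i"
  shows "column_length (xs[i := xs ! i - 1] @ [1]) k + (if k = xs ! i - 1 then 1 else 0) =
         column_length xs k + (if k = 0 then 1 else 0)"
  using column_length_decrement[OF assms, of k] by simp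

definition column_transfer :: "nat list \<Rightarrow> nat list \<Rightarrow> bool" where
  "column_transfer mu nu \<longleftrightarrow> (\<exists>a b. a \<noteq> b \<and>
     (\<forall>k. column_length nu k + (if k = a then 1 else 0) =
          column_length mu k + (if k = b then 1 else 0)))"

lemma unit_move_imp_column_transfer:
  assumes "sorted_wrt (\<ge>) mu" "0 \<notin> set mu" and "unit_move mu nu"
  shows "column_transfer mu nu"
proof -
  have "nu \<noteq> mu"
    using assms(3) by (simp add: unit_move_def)
  from assms(3) consider
      (transfer) i j where "i < length mu" "j < length mu" "i \<noteq> j" "1 \<le> mu ! i"
        "nu = normalize (mu[i := mu ! i - 1, j := mu ! j + 1])"
    | (new_part) i where "i < length mu" "1 \<le> mu ! i" "nu = normalize (mu[i := mu ! i - 1] @ [1])"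
    unfolding unit_move_def by blast
  then obtain a b where shift: "\<And>k. column_length nu k + (if k = a then 1 else 0) =
                                    column_length mu k + (if k = b then 1 else 0)"
  proof cases
    case transfer
    show ?thesis
      by (rule that[of "mu ! i - 1" "mu ! j"]) (use transfer column_length_transfer[of i mu j] in simp)
  next
    case new_part
    show ?thesis
      by (rule that[of "mu ! i - 1" 0]) (use new_part column_length_transfer_new_part[of i mu] in simp)
  qed
  have "sorted_wrt (\<ge>) nu" "0 \<notin> set nu"
    using assms(3) by (auto simp: unit_move_def sorted_normalize zero_notin_normalize)
  have "a \<noteq> b"
  proof
    assume "a = b"
    then have "column_length nu = column_length mu"
      using shift by (auto simp: fun_eq_iff)
    then show False
      using column_length_inject[OF \<open>sorted_wrt (\<ge>) nu\<close> \<open>0 \<notin> set nu\<close> assms(1,2)] \<open>nu \<noteq> mu\<close>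
      by blast
  qed
  then show ?thesis
    using shift unfolding column_transfer_def by blast
qed

lemma obtain_other_index:
  fixes xs :: "nat list"
  assumes "i < length xs" "(if xs ! i = v then 1 else 0) < count (mset xs) v"
  obtains j where "j < length xs" "j \<noteq> i" "xs ! j = v"
proof -
  have "count (mset (xs[i := Suc v])) v = count (mset xs) v - (if xs ! i = v then 1 else 0)"
    using assms(1) by (simp add: mset_update)
  then have "v \<in> set (xs[i := Suc v])"
    using assms(2) by (metis count_greater_zero_iff in_multiset_in_set zero_less_diff)
  then obtain j where j: "j < length xs" "xs[i := Suc v] ! j = v"
    by (auto simp: in_set_conv_nth)
  moreover have "j \<noteq> i"
    using j assms(1) by auto
  ultimately show thesis
    using that by simp
qed

lemma column_transfer_imp_unit_move:
  assumes "sorted_wrt (\<ge>) nu" "0 \<notin> set nu" and "column_transfer mu nu"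
  shows "unit_move mu nu"
proof -
  obtain a b where "a \<noteq> b" and shift: "\<And>k. column_length nu k + (if k = a then 1 else 0) =
                                            column_length mu k + (if k = b then 1 else 0)"
    using assms(3) unfolding column_transfer_def by blast
  then have "nu \<noteq> mu"
    using shift[of a] by auto
  have nu_eq: "nu = normalize ys"
    if "\<And>k. column_length ys k + (if k = a then 1 else 0) =
              column_length mu k + (if k = b then 1 else 0)" for ys
  proof (rule column_length_inject[OF assms(1,2) sorted_normalize zero_notin_normalize])
    show "column_length nu = column_length (normalize ys)"
      by (rule ext) (metis add_right_cancel that shift column_length_normalize)
  qed
  \<comment> \<open>Monotonicity of the column lengths of nu forces mu to have a part a + 1,
    and a further part b if b > 0.\<close>
  have "(if b = Suc a then 1 else 0) < count (mset mu) (Suc a)"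
    using shift[of a] shift[of "Suc a"] column_length_antimono[of a "Suc a" nu]
      column_length_diff_eq_count[of mu a] \<open>a \<noteq> b\<close>
    by (auto simp del: count_greater_zero_iff)
  then obtain i where i: "i < length mu" "mu ! i = Suc a"
    by (metis count_greater_zero_iff in_multiset_in_set in_set_conv_nth order.strict_trans1 zero_le)
  show ?thesis
  proof (cases b)
    case 0
    then have "nu = normalize (mu[i := mu ! i - 1] @ [1])"
      using nu_eq column_length_transfer_new_part[OF i(1)] i(2) by simp
    moreover have "1 \<le> mu ! i"
      using i(2) by simp
    ultimately show ?thesis
      using \<open>nu \<noteq> mu\<close> i(1) unfolding unit_move_def by blast
  next
    case (Suc b')
    have "(if mu ! i = b then 1 else 0) < count (mset mu) b"
      using shift[of b] shift[of b'] column_length_antimono[of b' b nu]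
        column_length_diff_eq_count[of mu b'] \<open>a \<noteq> b\<close> i(2) Suc
      by (auto simp del: count_greater_zero_iff)
    then obtain j where j: "j < length mu" "j \<noteq> i" "mu ! j = b"
      using obtain_other_index[OF i(1)] by blast
    then have "nu = normalize (mu[i := mu ! i - 1, j := mu ! j + 1])"
      using nu_eq column_length_transfer[OF i(1) j(1) j(2)[symmetric]] i(2) by simp
    moreover have "1 \<le> mu ! i"
      using i(2) by simp
    ultimately show ?thesis
      using \<open>nu \<noteq> mu\<close> i(1) j(1,2) unfolding unit_move_def by blast
  qed
qed

definition cell_move :: "'a set \<Rightarrow> 'a set \<Rightarrow> bool" where
  "cell_move D E \<longleftrightarrow> (\<exists>p\<in>D. \<exists>q. q \<notin> D \<and> E = insert q (D - {p}))"

lemma cell_move_image: "inj f \<Longrightarrow> cell_move D E \<Longrightarrow> cell_move (f ` D) (f ` E)"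
proof -
  assume "inj f" and "cell_move D E"
  then obtain p q where "p \<in> D" "q \<notin> D" "E = insert q (D - {p})"
    unfolding cell_move_def by blast
  moreover have "f ` insert q (D - {p}) = insert (f q) (f ` D - {f p})"
    using \<open>inj f\<close> by (simp add: image_set_diff)
  ultimately show ?thesis
    unfolding cell_move_def using \<open>inj f\<close>
    by (intro bexI[where x = "f p"] exI[where x = "f q"]) (auto simp: inj_image_mem_iff)
qed

lemma card_slice_cell_move:
  assumes "p \<in> D" "q \<notin> D" "finite {i. (i, k) \<in> D}"
  shows "card {i. (i, k) \<in> insert q (D - {p})} + (if snd p = k then 1 else 0) =
         card {i. (i, k) \<in> D} + (if snd q = k then 1 else 0)"
proof -
  obtain r c r' c' where pq: "p = (r, c)" "q = (r', c')"
    by fastforce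
  let ?S = "{i. (i, k) \<in> D}"
  define T where "T = (if c = k then ?S - {r} else ?S)"
  have "{i. (i, k) \<in> insert q (D - {p})} = (if c' = k then insert r' T else T)"
    using assms(1,2) pq by (auto simp: T_def)
  moreover have "card T + (if c = k then 1 else 0) = card ?S"
    using assms(1,3) pq card_Suc_Diff1[of ?S r] by (auto simp: T_def)
  moreover have "finite T" "c' = k \<Longrightarrow> r' \<notin> T"
    using assms(2,3) pq by (auto simp: T_def)
  ultimately show ?thesis
    using pq by simp
qed

lemma column_length_eq_card_slice: "column_length lam k = card {i. (i, k) \<in> diagram lam}"
  by (simp add: diagram_def flip: lessThan_def)

lemma column_transfer_iff_cell_move:
  "column_transfer mu nu \<longleftrightarrow> cell_move (diagram mu) (diagram nu)"
proof
  assume "column_transfer mu nu"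
  then obtain a b where "a \<noteq> b" and shift: "\<And>k. column_length nu k + (if k = a then 1 else 0) =
                                            column_length mu k + (if k = b then 1 else 0)"
    unfolding column_transfer_def by blast
  let ?p = "(column_length mu a - 1, a)" and ?q = "(column_length mu b, b)"
  have "diagram nu = insert ?q (diagram mu - {?p})"
  proof (intro set_eqI)
    fix z :: "nat \<times> nat"
    obtain i k where z: "z = (i, k)"
      by fastforce
    show "z \<in> diagram nu \<longleftrightarrow> z \<in> insert ?q (diagram mu - {?p})"
      using \<open>a \<noteq> b\<close> shift[of k] unfolding z diagram_def
      by (cases "k = a"; cases "k = b") auto
  qed
  moreover have "?p \<in> diagram mu" "?q \<notin> diagram mu"
    using \<open>a \<noteq> b\<close> shift[of a] by (auto simp: diagram_def)
  ultimately show "cell_move (diagram mu) (diagram nu)"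
    unfolding cell_move_def by blast
next
  assume "cell_move (diagram mu) (diagram nu)"
  then obtain p q where pq: "p \<in> diagram mu" "q \<notin> diagram mu"
    and nu: "diagram nu = insert q (diagram mu - {p})"
    unfolding cell_move_def by blast
  have shift: "column_length nu k + (if k = snd p then 1 else 0) =
               column_length mu k + (if k = snd q then 1 else 0)" for k
  proof -
    have "finite {i. (i, k) \<in> diagram mu}"
      by (simp add: diagram_def flip: lessThan_def)
    then show ?thesis
      using card_slice_cell_move[OF pq] by (simp add: column_length_eq_card_slice nu eq_commute[of k])
  qed
  have "snd p \<noteq> snd q"
  proof
    assume "snd p = snd q"
    then have "column_length nu = column_length mu"
      using shift by (simp add: fun_eq_iff)
    then have "diagram nu = diagram mu"
      by (simp add: diagram_def)
    then show False
      using nu pq by auto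
  qed
  then show "column_transfer mu nu"
    using shift unfolding column_transfer_def by blast
qed

lemma column_transfer_conjugate:
  assumes "sorted_wrt (\<ge>) mu" "sorted_wrt (\<ge>) nu" and "column_transfer mu nu"
  shows "column_transfer (conjugate mu) (conjugate nu)"
  using assms cell_move_image[of prod.swap]
  by (simp add: column_transfer_iff_cell_move diagram_conjugate)

lemma unit_move_conjugate:
  assumes "sorted_wrt (\<ge>) mu" "0 \<notin> set mu" "sorted_wrt (\<ge>) nu" and "unit_move mu nu"
  shows "unit_move (conjugate mu) (conjugate nu)"
proof -
  have "column_transfer mu nu"
    using unit_move_imp_column_transfer[OF assms(1,2,4)] .
  then have "column_transfer (conjugate mu) (conjugate nu)"
    using column_transfer_conjugate[OF assms(1,3)] by blast
  then show ?thesis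
    using column_transfer_imp_unit_move[OF sorted_conjugate zero_notin_conjugate] by blast
qed

lemma adj_conjugate:
  assumes "adj n mu nu"
  shows "adj n (conjugate mu) (conjugate nu)"
proof -
  have "sorted_wrt (\<ge>) mu" "0 \<notin> set mu" "sorted_wrt (\<ge>) nu" "0 \<notin> set nu"
    using assms by (auto simp: adj_def Partitions_def is_partition_def)
  then show ?thesis
    using assms by (auto simp: adj_def conjugate_in_Partitions unit_move_conjugate)
qed

section \<open>Rectangles and their attachment pairs\<close>

lemma conjugate_replicate: "0 < b \<Longrightarrow> conjugate (replicate b a) = replicate a b"
proof -
  assume "0 < b"
  then have "foldr max (replicate b a) 0 = a"
    by (intro foldr_max_eqI) simp
  then show ?thesis
    unfolding conjugate_eq_map_column_length by (intro replicate_eqI) auto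
qed

lemma conjugate_alpha:
  assumes "2 \<le> a" "2 \<le> b"
  shows "conjugate (alpha (replicate b a)) = beta (replicate a b)"
proof -
  let ?lam = "alpha (replicate b a)"
  have "?lam = [a + 1] @ replicate (b - 2) a @ [a - 1]"
    using assms by (simp add: alpha_def)
  then have col: "column_length ?lam k =
             (if k < a - 1 then b else if k = a - 1 then b - 1 else if k = a then 1 else 0)" for k
    using assms by auto
  then have "foldr max ?lam 0 = a + 1"
    using assms by (intro foldr_max_eqI) auto
  moreover obtain c where "a = Suc (Suc c)"
    using assms by (metis add_2_eq_Suc le_Suc_ex)
  then have "[0..<a + 1] = [0..<a - 1] @ [a - 1, a]"
    by simp
  moreover have "map (column_length ?lam) [0..<a - 1] = replicate (a - 1) b"
    by (rule replicate_eqI) (auto simp: col)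
  ultimately show ?thesis
    using assms by (auto simp: conjugate_eq_map_column_length col beta_def)
qed

lemma conjugate_beta:
  assumes "2 \<le> a" "2 \<le> b"
  shows "conjugate (beta (replicate b a)) = alpha (replicate a b)"
proof -
  let ?lam = "beta (replicate b a)"
  have "?lam = replicate (b - 1) a @ [a - 1, 1]"
    using assms by (simp add: beta_def)
  then have col: "column_length ?lam k =
             (if k = 0 then b + 1 else if k < a - 1 then b else if k = a - 1 then b - 1 else 0)" for k
    using assms by auto
  then have "foldr max ?lam 0 = a"
    using assms by (intro foldr_max_eqI) auto
  moreover obtain c where "a = Suc (Suc c)"
    using assms by (metis add_2_eq_Suc le_Suc_ex)
  then have "[0..<a] = [0] @ [1..<a - 1] @ [a - 1]"
    by (simp add: upt_conv_Cons)
  moreover have "map (column_length ?lam) [1..<a - 1] = replicate (a - 2) b"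
    by (rule replicate_eqI) (auto simp: col)
  ultimately show ?thesis
    using assms by (auto simp: conjugate_eq_map_column_length col alpha_def)
qed
lemma Rect_cases:
  assumes "rho \<in> Rect n"
  obtains a b where "rho = replicate b a" "a * b = n" "2 \<le> a" "2 \<le> b"
  using assms unfolding Rect_def by blast

lemma conjugate_in_Rect: "rho \<in> Rect n \<Longrightarrow> conjugate rho \<in> Rect n"
  by (erule Rect_cases) (auto simp: Rect_def conjugate_replicate mult.commute)

lemma conjugate_conjugate_Rect: "rho \<in> Rect n \<Longrightarrow> conjugate (conjugate rho) = rho"
  by (erule Rect_cases) (simp add: conjugate_replicate)

lemma attach_conjugate: "rho \<in> Rect n \<Longrightarrow> attach (conjugate rho) = conjugate ` attach rho"
  by (erule Rect_cases) (auto simp: attach_def conjugate_replicate conjugate_alpha conjugate_beta)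

lemma support_edge_conjugate:
  "rho \<in> Rect n \<Longrightarrow> support_edge (conjugate rho) = map_uprod conjugate (support_edge rho)"
  by (erule Rect_cases) (simp add: support_edge_def conjugate_replicate conjugate_alpha conjugate_beta)

section \<open>Support walks\<close>

lemma conjugate_conjugate_Partitions: "lam \<in> Partitions n \<Longrightarrow> conjugate (conjugate lam) = lam"
  by (simp add: Partitions_def is_partition_def conjugate_conjugate)

lemma conjugate_in_non_Rect:
  assumes "lam \<in> Partitions n - Rect n"
  shows "conjugate lam \<in> Partitions n - Rect n"
proof -
  have "conjugate (conjugate lam) = lam"
    using assms conjugate_conjugate_Partitions by blast
  then show ?thesis
    using assms conjugate_in_Partitions conjugate_in_Rect by (metis DiffD1 DiffD2 DiffI)
qed

lemma walk_conjugate: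
  assumes "walk n p"
  shows "walk n (map conjugate p)"
proof -
  have "conjugate ` set p \<subseteq> Partitions n - Rect n"
    using assms conjugate_in_non_Rect unfolding walk_def image_subset_iff by (meson subsetD)
  then show ?thesis
    using assms unfolding walk_def by (simp add: adj_conjugate)
qed

lemma walk_conjugate_conjugate: "walk n p \<Longrightarrow> map conjugate (map conjugate p) = p"
  unfolding walk_def map_map by (intro map_idI) (auto simp: conjugate_conjugate_Partitions)

lemma support_walks_conjugate_subset:
  assumes "rho \<in> Rect n" "sigma \<in> Rect n"
  shows "map conjugate ` support_walks n rho sigma \<subseteq> support_walks n (conjugate rho) (conjugate sigma)"
proof clarify
  fix p assume "p \<in> support_walks n rho sigma"
  then have "walk n p" "p \<noteq> []" "hd p \<in> attach rho" "last p \<in> attach sigma"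
    by (auto simp: support_walks_def walk_def)
  then show "map conjugate p \<in> support_walks n (conjugate rho) (conjugate sigma)"
    by (simp add: support_walks_def walk_conjugate hd_map last_map
        attach_conjugate[OF assms(1)] attach_conjugate[OF assms(2)])
qed

lemma bij_betw_support_walks:
  assumes "rho \<in> Rect n" "sigma \<in> Rect n"
  shows "bij_betw (map conjugate) (support_walks n rho sigma)
           (support_walks n (conjugate rho) (conjugate sigma))"
proof (rule bij_betw_byWitness[where f' = "map conjugate"])
  show "\<forall>p\<in>support_walks n rho sigma. map conjugate (map conjugate p) = p"
       "\<forall>p\<in>support_walks n (conjugate rho) (conjugate sigma). map conjugate (map conjugate p) = p"
    using walk_conjugate_conjugate unfolding support_walks_def by blast+
  show "map conjugate ` support_walks n rho sigma \<subseteq> support_walks n (conjugate rho) (conjugate sigma)"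
    using support_walks_conjugate_subset[OF assms] .
  show "map conjugate ` support_walks n (conjugate rho) (conjugate sigma) \<subseteq> support_walks n rho sigma"
    using support_walks_conjugate_subset[OF conjugate_in_Rect[OF assms(1)] conjugate_in_Rect[OF assms(2)]]
    by (simp add: conjugate_conjugate_Rect[OF assms(1)] conjugate_conjugate_Rect[OF assms(2)])
qed

lemma support_walks_conjugate:
  assumes "rho \<in> Rect n" "sigma \<in> Rect n"
  shows "support_walks n (conjugate rho) (conjugate sigma) = map conjugate ` support_walks n rho sigma"
  using bij_betw_imp_surj_on[OF bij_betw_support_walks[OF assms]] by simp

lemma d_sup_conjugate:
  assumes "rho \<in> Rect n" "sigma \<in> Rect n"
  shows "d_sup n (conjugate rho) (conjugate sigma) = d_sup n rho sigma"
  unfolding d_sup_def support_walks_conjugate[OF assms] by (simp add: image_image)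

lemma support_geodesics_conjugate:
  assumes "rho \<in> Rect n" "sigma \<in> Rect n"
  shows "support_geodesics n (conjugate rho) (conjugate sigma) = map conjugate ` support_geodesics n rho sigma"
  unfolding support_geodesics_def d_sup_conjugate[OF assms] support_walks_conjugate[OF assms] by auto

lemma path_edges_map: "path_edges (map f p) = map_uprod f ` path_edges p"
  by (auto simp: path_edges_def setcompr_eq_image image_image intro!: image_cong)

theorem proposition4p10:
  assumes "rho \<in> Rect n" and "sigma \<in> Rect n"
  shows "attach (conjugate rho) = conjugate ` attach rho
       \<and> support_edge (conjugate rho) = map_uprod conjugate (support_edge rho)
       \<and> d_sup n rho sigma = d_sup n (conjugate rho) (conjugate sigma)
       \<and> bij_betw (map conjugate) (support_geodesics n rho sigma)
            (support_geodesics n (conjugate rho) (conjugate sigma))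
       \<and> Corr_all n (conjugate rho) (conjugate sigma) = conj_graph (Corr_all n rho sigma)"
proof (intro conjI)
  show "bij_betw (map conjugate) (support_geodesics n rho sigma)
          (support_geodesics n (conjugate rho) (conjugate sigma))"
    unfolding support_geodesics_conjugate[OF assms]
    by (rule bij_betw_subset[OF bij_betw_support_walks[OF assms]]) (auto simp: support_geodesics_def)
  show "Corr_all n (conjugate rho) (conjugate sigma) = conj_graph (Corr_all n rho sigma)"
    by (simp add: Corr_all_def conj_graph_def support_geodesics_conjugate[OF assms] image_UN path_edges_map)
qed (simp_all add: attach_conjugate[OF assms(1)] support_edge_conjugate[OF assms(1)] d_sup_conjugate[OF assms])

end
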